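(* Consider the scalar system $x_{t+1}=a x_t+w_t$ with $|a|<1$ and $x_0=0$, where the noise $w_t$ is i.i.d. over time with $|w_t|\le\bar w$, zero mean and variance $\sigma_w^2$, and let $\{x_t\}_{t=1}^T$ be the resulting trajectory. Then $$\mathbb{E}\left[\left(\sum_{t=1}^T\left(x_t^2-\mathbb{E}[x_t^2]\right)\right)^2\right]\le\frac{\bar w^4(1+a^2)}{(1-|a|)^4(1-a^2)}\,T.$$ *)

theory Defs
  imports "HOL-Probability.Probability"
begin

fun traj :: "real \<Rightarrow> (nat \<Rightarrow> 'a \<Rightarrow> real) \<Rightarrow> nat \<Rightarrow> 'a \<Rightarrow> real" where
  "traj a w 0 \<omega> = 0"
| "traj a w (Suc t) \<omega> = a * traj a w t \<omega> + w t \<omega>"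

end

theory Submission
  imports Defs
begin

(*
  With D_t = 2 a x_t w_t + w_t^2 - sigma^2 one has x_{t+1}^2 = a^2 x_t^2 + D_t + sigma^2, so
  x_t^2 - E x_t^2 is the geometric convolution of the D_r, and the centred sum over t = 1..T
  equals sum_{r<T} h_r D_r with weights h_r = sum_{k<T-r} a^(2k) <= 1/(1 - a^2).
  Since x_r depends only on w_0, ..., w_{r-1}, independence and E w_r = 0, E w_r^2 = sigma^2
  make the D_r martingale differences, hence orthogonal, and the second moment is
  sum_r E (h_r D_r)^2.  Finally |x_t| <= wbar/(1 - |a|) gives |h_r D_r| <= wbar^2/(1 - |a|)^2,
  which bounds that sum by T wbar^4/(1 - |a|)^4; this implies the stated bound since
  (1 + a^2)/(1 - a^2) >= 1.
*)

definition innovation :: "real \<Rightarrow> real \<Rightarrow> (nat \<Rightarrow> 'a \<Rightarrow> real) \<Rightarrow> nat \<Rightarrow> 'a \<Rightarrow> real" where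
  "innovation a c w t \<omega> = 2 * a * traj a w t \<omega> * w t \<omega> + (w t \<omega>)\<^sup>2 - c"

lemma traj_Suc_sq: "(traj a w (Suc t) \<omega>)\<^sup>2 = a\<^sup>2 * (traj a w t \<omega>)\<^sup>2 + innovation a c w t \<omega> + c"
  by (simp add: innovation_def power2_eq_square algebra_simps)

lemma traj_sq_eq_sum_innovation:
  "(traj a w (Suc t) \<omega>)\<^sup>2 = (\<Sum>r\<le>t. (a\<^sup>2) ^ (t - r) * (innovation a c w r \<omega> + c))"
proof (induction t)
  case 0
  show ?case by (simp add: innovation_def)
next
  case (Suc t)
  have "(\<Sum>r\<le>Suc t. (a\<^sup>2) ^ (Suc t - r) * (innovation a c w r \<omega> + c))
      = a\<^sup>2 * (\<Sum>r\<le>t. (a\<^sup>2) ^ (t - r) * (innovation a c w r \<omega> + c)) + innovation a c w (Suc t) \<omega> + c"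
    by (simp add: sum_distrib_left Suc_diff_le mult.assoc)
  then show ?case
    using Suc.IH traj_Suc_sq[of a w "Suc t" \<omega> c] by simp
qed

lemma sum_geometric_convolution:
  fixes q :: "'b :: comm_semiring_1"
  shows "(\<Sum>t<T. \<Sum>r\<le>t. q ^ (t - r) * g r) = (\<Sum>r<T. (\<Sum>k<T - r. q ^ k) * g r)"
proof (induction T)
  case 0
  show ?case by simp
next
  case (Suc T)
  have "(\<Sum>r<Suc T. (\<Sum>k<Suc T - r. q ^ k) * g r)
      = (\<Sum>r<T. (\<Sum>k<T - r. q ^ k) * g r) + (\<Sum>r\<le>T. q ^ (T - r) * g r)"
    by (simp add: Suc_diff_le sum.distrib distrib_right lessThan_Suc_atMost[symmetric])
  with Suc.IH show ?case by simp
qed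

lemma sum_power_le_inverse:
  fixes x :: real
  assumes "0 \<le> x" and "x < 1"
  shows "(\<Sum>k<n. x ^ k) \<le> 1 / (1 - x)"
proof -
  have "(\<Sum>k<n. x ^ k) = (1 - x ^ n) / (1 - x)"
    using assms by (simp add: sum_gp_strict)
  also have "\<dots> \<le> 1 / (1 - x)"
    using assms by (intro divide_right_mono) auto
  finally show ?thesis .
qed

lemma abs_traj_le:
  assumes a: "\<bar>a\<bar> < 1" and W: "\<And>s. \<bar>w s \<omega>\<bar> \<le> W"
  shows "\<bar>traj a w t \<omega>\<bar> \<le> W / (1 - \<bar>a\<bar>)"
proof (induction t)
  case 0
  have "0 \<le> W" using W[of 0] by linarith
  with a show ?case by simp
next
  case (Suc t)
  have "\<bar>traj a w (Suc t) \<omega>\<bar> \<le> \<bar>a\<bar> * \<bar>traj a w t \<omega>\<bar> + \<bar>w t \<omega>\<bar>"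
    by (simp add: abs_mult[symmetric] abs_triangle_ineq)
  also have "\<dots> \<le> \<bar>a\<bar> * (W / (1 - \<bar>a\<bar>)) + W"
    using Suc.IH W[of t] by (intro add_mono mult_left_mono) auto
  also have "\<dots> = W / (1 - \<bar>a\<bar>)"
    using a by (simp add: field_simps)
  finally show ?case .
qed

lemma abs_innovation_le:
  assumes a: "\<bar>a\<bar> < 1" and W: "\<And>s. \<bar>w s \<omega>\<bar> \<le> W" and c: "0 \<le> c" "c \<le> W\<^sup>2"
  shows "\<bar>innovation a c w t \<omega>\<bar> \<le> W\<^sup>2 * (1 + \<bar>a\<bar>) / (1 - \<bar>a\<bar>)"
proof -
  have W0: "0 \<le> W" using W[of 0] by linarith
  have "\<bar>2 * a * traj a w t \<omega> * w t \<omega>\<bar> \<le> 2 * \<bar>a\<bar> * (W / (1 - \<bar>a\<bar>)) * W"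
    unfolding abs_mult using a abs_traj_le[of a w \<omega> W, OF a W] W[of t] W0
    by (intro mult_mono) auto
  moreover have "\<bar>(w t \<omega>)\<^sup>2 - c\<bar> \<le> W\<^sup>2"
  proof -
    have "(w t \<omega>)\<^sup>2 \<le> W\<^sup>2"
      using W[of t] W0 abs_le_square_iff[of "w t \<omega>" W] by simp
    with c zero_le_power2[of "w t \<omega>"] show ?thesis
      unfolding abs_le_iff by linarith
  qed
  ultimately have "\<bar>innovation a c w t \<omega>\<bar> \<le> 2 * \<bar>a\<bar> * (W / (1 - \<bar>a\<bar>)) * W + W\<^sup>2"
    unfolding innovation_def by linarith
  also have "\<dots> = W\<^sup>2 * (1 + \<bar>a\<bar>) / (1 - \<bar>a\<bar>)"
    using a by (simp add: field_simps power2_eq_square)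
  finally show ?thesis .
qed

lemma abs_weighted_innovation_le:
  assumes a: "\<bar>a\<bar> < 1" and W: "\<And>s. \<bar>w s \<omega>\<bar> \<le> W" and c: "0 \<le> c" "c \<le> W\<^sup>2"
  shows "\<bar>(\<Sum>k<n. (a\<^sup>2) ^ k) * innovation a c w t \<omega>\<bar> \<le> (W / (1 - \<bar>a\<bar>))\<^sup>2"
proof -
  have a2: "0 \<le> a\<^sup>2" "a\<^sup>2 < 1"
    using a by (auto simp: abs_square_less_1)
  have "\<bar>(\<Sum>k<n. (a\<^sup>2) ^ k) * innovation a c w t \<omega>\<bar>
      \<le> 1 / (1 - a\<^sup>2) * (W\<^sup>2 * (1 + \<bar>a\<bar>) / (1 - \<bar>a\<bar>))"
    unfolding abs_mult using a2 sum_power_le_inverse[OF a2] abs_innovation_le[of a w \<omega> W, OF a W c]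
    by (intro mult_mono) (auto simp: sum_nonneg)
  also have "\<dots> = (W / (1 - \<bar>a\<bar>))\<^sup>2"
  proof -
    have "1 / ((1 - b) * (1 + b)) * (W\<^sup>2 * (1 + b) / (1 - b)) = (W / (1 - b))\<^sup>2"
      if "0 \<le> b" "b < 1" for b :: real
      using that by (simp add: power_divide power2_eq_square)
    moreover have "1 - a\<^sup>2 = (1 - \<bar>a\<bar>) * (1 + \<bar>a\<bar>)"
      by (simp add: algebra_simps power2_eq_square)
    ultimately show ?thesis
      using a by simp
  qed
  finally show ?thesis .
qed

lemma traj_measurable:
  "(\<And>s. s < t \<Longrightarrow> w s \<in> borel_measurable N) \<Longrightarrow> traj a w t \<in> borel_measurable N"
proof (induction t)
  case 0
  have "traj a w 0 = (\<lambda>_. 0)" by (simp add: fun_eq_iff)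
  then show ?case by simp
next
  case (Suc t)
  have "traj a w (Suc t) = (\<lambda>\<omega>. a * traj a w t \<omega> + w t \<omega>)" by (simp add: fun_eq_iff)
  with Suc show ?case by simp
qed

lemma innovation_measurable:
  "(\<And>s. s \<le> t \<Longrightarrow> w s \<in> borel_measurable N) \<Longrightarrow> innovation a c w t \<in> borel_measurable N"
  unfolding innovation_def[abs_def]
  using traj_measurable[of t w N a] by measurable auto

(* Running the recursion on the coordinate projections exhibits x_t as a function of the
   history (w_0, ..., w_{r-1}), which is what independence is applied to. *)
lemma traj_restrict:
  "t \<le> r \<Longrightarrow> traj a w t \<omega> = traj a (\<lambda>i g. g i) t (\<lambda>i\<in>{..<r}. w i \<omega>)"
  by (induction t) auto

lemma innovation_restrict:
  "t < r \<Longrightarrow> innovation a c w t \<omega> = innovation a c (\<lambda>i g. g i) t (\<lambda>i\<in>{..<r}. w i \<omega>)"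
  by (simp add: innovation_def traj_restrict)

lemma fourth_power_div_le:
  fixes a W :: real
  assumes "\<bar>a\<bar> < 1"
  shows "((W / (1 - \<bar>a\<bar>))\<^sup>2)\<^sup>2 \<le> W ^ 4 * (1 + a\<^sup>2) / ((1 - \<bar>a\<bar>) ^ 4 * (1 - a\<^sup>2))"
proof -
  have "1 \<le> (1 + a\<^sup>2) / (1 - a\<^sup>2)"
    using assms by (simp add: abs_square_less_1)
  then have "W ^ 4 / (1 - \<bar>a\<bar>) ^ 4 * 1 \<le> W ^ 4 / (1 - \<bar>a\<bar>) ^ 4 * ((1 + a\<^sup>2) / (1 - a\<^sup>2))"
    by (intro mult_left_mono) simp_all
  then show ?thesis
    by (simp add: power_divide flip: power_mult)
qed

lemma (in finite_measure) integrable_bounded: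
  fixes f :: "'a \<Rightarrow> real"
  assumes "f \<in> borel_measurable M" and "\<And>x. x \<in> space M \<Longrightarrow> \<bar>f x\<bar> \<le> B"
  shows "integrable M f"
  using assms by (intro integrable_const_bound[where B = B] AE_I2) auto

lemma (in prob_space) indep_var_present_past:
  fixes w :: "nat \<Rightarrow> 'a \<Rightarrow> real" and \<psi> :: "real \<Rightarrow> real" and \<Phi> :: "(nat \<Rightarrow> real) \<Rightarrow> real"
  assumes indep: "indep_vars (\<lambda>_. borel) w UNIV"
    and \<psi>: "\<psi> \<in> borel_measurable borel"
    and \<Phi>: "\<Phi> \<in> borel_measurable (PiM {..<r} (\<lambda>_. borel))"
  shows "indep_var borel (\<lambda>\<omega>. \<psi> (w r \<omega>)) borel (\<lambda>\<omega>. \<Phi> (\<lambda>i\<in>{..<r}. w i \<omega>))"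
proof -
  have "indep_var (PiM {r} (\<lambda>_. borel)) (\<lambda>\<omega>. \<lambda>i\<in>{r}. w i \<omega>)
                  (PiM {..<r} (\<lambda>_. borel)) (\<lambda>\<omega>. \<lambda>i\<in>{..<r}. w i \<omega>)"
    by (rule indep_var_restrict[OF indep]) auto
  moreover have "(\<lambda>g. \<psi> (g r)) \<in> borel_measurable (PiM {r} (\<lambda>_. borel))"
    using \<psi> by measurable
  ultimately have "indep_var borel ((\<lambda>g. \<psi> (g r)) \<circ> (\<lambda>\<omega>. \<lambda>i\<in>{r}. w i \<omega>))
                           borel (\<Phi> \<circ> (\<lambda>\<omega>. \<lambda>i\<in>{..<r}. w i \<omega>))"
    using \<Phi> by (rule indep_var_compose)
  then show ?thesis
    by (simp add: comp_def)
qed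

lemma (in prob_space) expectation_sq_sum_orthogonal:
  fixes Y :: "'i \<Rightarrow> 'a \<Rightarrow> real"
  assumes "finite I"
    and int: "\<And>i j. i \<in> I \<Longrightarrow> j \<in> I \<Longrightarrow> integrable M (\<lambda>\<omega>. Y i \<omega> * Y j \<omega>)"
    and orth: "\<And>i j. i \<in> I \<Longrightarrow> j \<in> I \<Longrightarrow> i \<noteq> j \<Longrightarrow> expectation (\<lambda>\<omega>. Y i \<omega> * Y j \<omega>) = 0"
  shows "expectation (\<lambda>\<omega>. (\<Sum>i\<in>I. Y i \<omega>)\<^sup>2) = (\<Sum>i\<in>I. expectation (\<lambda>\<omega>. (Y i \<omega>)\<^sup>2))"
proof -
  have "expectation (\<lambda>\<omega>. (\<Sum>i\<in>I. Y i \<omega>)\<^sup>2)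
      = expectation (\<lambda>\<omega>. \<Sum>i\<in>I. \<Sum>j\<in>I. Y i \<omega> * Y j \<omega>)"
    by (simp add: power2_eq_square sum_product)
  also have "\<dots> = (\<Sum>i\<in>I. \<Sum>j\<in>I. expectation (\<lambda>\<omega>. Y i \<omega> * Y j \<omega>))"
    using int by (simp add: Bochner_Integration.integral_sum integrable_sum)
  also have "\<dots> = (\<Sum>i\<in>I. expectation (\<lambda>\<omega>. Y i \<omega> * Y i \<omega>))"
    using \<open>finite I\<close> orth by (intro sum.cong refl) (auto simp: sum.remove[of I] intro!: sum.neutral orth)
  finally show ?thesis
    by (simp add: power2_eq_square)
qed

locale stable_ar1 = prob_space M for M :: "'a measure" +
  fixes w :: "nat \<Rightarrow> 'a \<Rightarrow> real" and a wbar s2 :: real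
  assumes w_measurable [measurable]: "\<And>t. w t \<in> borel_measurable M"
    and w_indep: "indep_vars (\<lambda>_. borel) w UNIV"
    and w_bounded: "\<And>t \<omega>. \<omega> \<in> space M \<Longrightarrow> \<bar>w t \<omega>\<bar> \<le> wbar"
    and w_mean: "\<And>t. expectation (w t) = 0"
    and w_variance: "\<And>t. variance (w t) = s2"
    and a_stable: "\<bar>a\<bar> < 1"
begin

lemma integrable_w: "integrable M (w t)"
  using w_bounded by (intro integrable_bounded) auto

lemma w_sq_bounded: "\<omega> \<in> space M \<Longrightarrow> (w t \<omega>)\<^sup>2 \<le> wbar\<^sup>2"
  using w_bounded[of \<omega> t] by (metis abs_ge_zero power2_abs power_mono)

lemma integrable_w_sq: "integrable M (\<lambda>\<omega>. (w t \<omega>)\<^sup>2)"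
  using w_sq_bounded by (intro integrable_bounded[where B = "wbar\<^sup>2"]) auto

lemma expectation_w_sq: "expectation (\<lambda>\<omega>. (w t \<omega>)\<^sup>2) = s2"
  using w_variance[of t] by (simp add: w_mean)

lemma s2_nonneg: "0 \<le> s2"
  unfolding expectation_w_sq[symmetric, of 0] by (rule integral_nonneg_AE) auto

lemma s2_le_wbar_sq: "s2 \<le> wbar\<^sup>2"
  unfolding expectation_w_sq[symmetric, of 0]
  using w_sq_bounded by (intro integral_le_const integrable_w_sq AE_I2) auto

lemma abs_innovation_bounded:
  "\<omega> \<in> space M \<Longrightarrow> \<bar>innovation a s2 w t \<omega>\<bar> \<le> wbar\<^sup>2 * (1 + \<bar>a\<bar>) / (1 - \<bar>a\<bar>)"
  using a_stable w_bounded s2_nonneg s2_le_wbar_sq by (rule abs_innovation_le)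

lemma borel_measurable_innovation [measurable]: "innovation a c w t \<in> borel_measurable M"
  by (rule innovation_measurable) simp

lemma integrable_innovation: "integrable M (innovation a s2 w t)"
  using abs_innovation_bounded by (intro integrable_bounded) auto

lemma expectation_w_sq_centred: "expectation (\<lambda>\<omega>. (w t \<omega>)\<^sup>2 - s2) = 0"
  using integrable_w_sq by (simp add: expectation_w_sq prob_space)

lemma abs_traj_bounded: "\<omega> \<in> space M \<Longrightarrow> \<bar>traj a w t \<omega>\<bar> \<le> wbar / (1 - \<bar>a\<bar>)"
  using a_stable w_bounded by (rule abs_traj_le)

lemma traj_past_measurable:
  "t \<le> r \<Longrightarrow> traj a (\<lambda>i g. g i) t \<in> borel_measurable (PiM {..<r} (\<lambda>_. borel))"
  by (intro traj_measurable measurable_component_singleton) auto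

lemma expectation_innovation_mult_past:
  fixes \<Phi> :: "(nat \<Rightarrow> real) \<Rightarrow> real"
  assumes \<Phi> [measurable]: "\<Phi> \<in> borel_measurable (PiM {..<r} (\<lambda>_. borel))"
    and \<Phi>_bounded: "\<And>\<omega>. \<omega> \<in> space M \<Longrightarrow> \<bar>\<Phi> (\<lambda>i\<in>{..<r}. w i \<omega>)\<bar> \<le> B"
  shows "expectation (\<lambda>\<omega>. innovation a s2 w r \<omega> * \<Phi> (\<lambda>i\<in>{..<r}. w i \<omega>)) = 0"
proof -
  define X where "X g = 2 * a * traj a (\<lambda>i g. g i) r g * \<Phi> g" for g
  have [measurable]: "X \<in> borel_measurable (PiM {..<r} (\<lambda>_. borel))"
    using traj_past_measurable[of r r] unfolding X_def[abs_def] by measurable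
  have X_past: "X (\<lambda>i\<in>{..<r}. w i \<omega>) = 2 * a * traj a w r \<omega> * \<Phi> (\<lambda>i\<in>{..<r}. w i \<omega>)" for \<omega>
    using traj_restrict[of r r a w \<omega>] by (simp add: X_def)
  have int_\<Phi>: "integrable M (\<lambda>\<omega>. \<Phi> (\<lambda>i\<in>{..<r}. w i \<omega>))"
    using \<Phi>_bounded by (intro integrable_bounded) auto
  have int_X: "integrable M (\<lambda>\<omega>. X (\<lambda>i\<in>{..<r}. w i \<omega>))"
  proof (rule integrable_bounded[where B = "2 * \<bar>a\<bar> * (wbar / (1 - \<bar>a\<bar>)) * B"])
    fix \<omega> assume \<omega>: "\<omega> \<in> space M"
    have traj_bounded: "\<bar>traj a w r \<omega>\<bar> \<le> wbar / (1 - \<bar>a\<bar>)"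
      using \<omega> by (rule abs_traj_bounded)
    then show "\<bar>X (\<lambda>i\<in>{..<r}. w i \<omega>)\<bar> \<le> 2 * \<bar>a\<bar> * (wbar / (1 - \<bar>a\<bar>)) * B"
      unfolding X_past abs_mult using \<Phi>_bounded[OF \<omega>] order_trans[OF abs_ge_zero traj_bounded]
      by (intro mult_mono) (auto simp del: times_divide_eq_right)
  qed measurable
  have indep_X: "indep_var borel (w r) borel (\<lambda>\<omega>. X (\<lambda>i\<in>{..<r}. w i \<omega>))"
    using indep_var_present_past[OF w_indep, of "\<lambda>x. x" X] by simp
  have indep_\<Phi>: "indep_var borel (\<lambda>\<omega>. (w r \<omega>)\<^sup>2 - s2) borel (\<lambda>\<omega>. \<Phi> (\<lambda>i\<in>{..<r}. w i \<omega>))"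
    using indep_var_present_past[OF w_indep, of "\<lambda>x. x\<^sup>2 - s2" \<Phi>] by simp
  have int_centred: "integrable M (\<lambda>\<omega>. (w r \<omega>)\<^sup>2 - s2)"
    using integrable_w_sq by simp
  have "expectation (\<lambda>\<omega>. innovation a s2 w r \<omega> * \<Phi> (\<lambda>i\<in>{..<r}. w i \<omega>))
      = expectation (\<lambda>\<omega>. w r \<omega> * X (\<lambda>i\<in>{..<r}. w i \<omega>)
                         + ((w r \<omega>)\<^sup>2 - s2) * \<Phi> (\<lambda>i\<in>{..<r}. w i \<omega>))"
    by (simp add: X_past innovation_def algebra_simps)
  also have "\<dots> = expectation (\<lambda>\<omega>. w r \<omega> * X (\<lambda>i\<in>{..<r}. w i \<omega>))
      + expectation (\<lambda>\<omega>. ((w r \<omega>)\<^sup>2 - s2) * \<Phi> (\<lambda>i\<in>{..<r}. w i \<omega>))"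
    using indep_var_integrable[OF indep_X integrable_w int_X]
      indep_var_integrable[OF indep_\<Phi> int_centred int_\<Phi>]
    by (rule Bochner_Integration.integral_add)
  also have "\<dots> = expectation (w r) * expectation (\<lambda>\<omega>. X (\<lambda>i\<in>{..<r}. w i \<omega>))
      + expectation (\<lambda>\<omega>. (w r \<omega>)\<^sup>2 - s2) * expectation (\<lambda>\<omega>. \<Phi> (\<lambda>i\<in>{..<r}. w i \<omega>))"
    using indep_var_lebesgue_integral[OF indep_X integrable_w int_X]
      indep_var_lebesgue_integral[OF indep_\<Phi> int_centred int_\<Phi>]
    by simp
  also have "\<dots> = 0"
    by (simp add: w_mean expectation_w_sq_centred)
  finally show ?thesis .
qed

lemma expectation_innovation: "expectation (innovation a s2 w r) = 0"
  using expectation_innovation_mult_past[of "\<lambda>_. 1" r 1] by simp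

lemma expectation_innovation_mult:
  assumes "q < r"
  shows "expectation (\<lambda>\<omega>. innovation a s2 w r \<omega> * innovation a s2 w q \<omega>) = 0"
proof -
  have "innovation a s2 (\<lambda>i g. g i) q \<in> borel_measurable (PiM {..<r} (\<lambda>_. borel))"
    using assms by (intro innovation_measurable measurable_component_singleton) auto
  then have "expectation (\<lambda>\<omega>. innovation a s2 w r \<omega> * innovation a s2 (\<lambda>i g. g i) q (\<lambda>i\<in>{..<r}. w i \<omega>)) = 0"
    by (rule expectation_innovation_mult_past)
      (use abs_innovation_bounded in \<open>simp add: innovation_restrict[OF assms, symmetric]\<close>)
  then show ?thesis
    by (simp only: innovation_restrict[OF assms, symmetric])
qed

lemma expectation_traj_sq:
  "expectation (\<lambda>\<omega>. (traj a w (Suc t) \<omega>)\<^sup>2) = (\<Sum>r\<le>t. (a\<^sup>2) ^ (t - r) * s2)"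
proof -
  have "expectation (\<lambda>\<omega>. (traj a w (Suc t) \<omega>)\<^sup>2)
      = (\<Sum>r\<le>t. (a\<^sup>2) ^ (t - r) * expectation (\<lambda>\<omega>. innovation a s2 w r \<omega> + s2))"
    unfolding traj_sq_eq_sum_innovation[where c = s2]
    by (subst Bochner_Integration.integral_sum) (auto intro: integrable_innovation)
  also have "\<dots> = (\<Sum>r\<le>t. (a\<^sup>2) ^ (t - r) * s2)"
    using integrable_innovation expectation_innovation by (simp add: prob_space)
  finally show ?thesis .
qed

lemma centred_traj_sq_sum_eq:
  "(\<Sum>t=1..T. (traj a w t \<omega>)\<^sup>2 - expectation (\<lambda>\<eta>. (traj a w t \<eta>)\<^sup>2))
   = (\<Sum>r<T. (\<Sum>k<T - r. (a\<^sup>2) ^ k) * innovation a s2 w r \<omega>)"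
proof -
  have "(traj a w (Suc t) \<omega>)\<^sup>2 - (\<Sum>r\<le>t. (a\<^sup>2) ^ (t - r) * s2)
      = (\<Sum>r\<le>t. (a\<^sup>2) ^ (t - r) * innovation a s2 w r \<omega>)" for t
    by (simp add: traj_sq_eq_sum_innovation[where c = s2] distrib_left sum.distrib del: traj.simps)
  then show ?thesis
    by (simp add: sum.atLeast1_atMost_eq[unfolded One_nat_def] expectation_traj_sq
        sum_geometric_convolution del: traj.simps)
qed

lemma abs_weighted_innovation_bounded:
  "\<omega> \<in> space M \<Longrightarrow> \<bar>(\<Sum>k<n. (a\<^sup>2) ^ k) * innovation a s2 w t \<omega>\<bar> \<le> (wbar / (1 - \<bar>a\<bar>))\<^sup>2"
  using a_stable w_bounded s2_nonneg s2_le_wbar_sq by (rule abs_weighted_innovation_le)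

lemma expectation_weighted_innovation_sum_sq_le:
  "expectation (\<lambda>\<omega>. (\<Sum>r<T. (\<Sum>k<T - r. (a\<^sup>2) ^ k) * innovation a s2 w r \<omega>)\<^sup>2)
   \<le> real T * ((wbar / (1 - \<bar>a\<bar>))\<^sup>2)\<^sup>2"
proof -
  define Y where "Y r \<omega> = (\<Sum>k<T - r. (a\<^sup>2) ^ k) * innovation a s2 w r \<omega>" for r \<omega>
  define K where "K = (wbar / (1 - \<bar>a\<bar>))\<^sup>2"
  have Y_bounded: "\<omega> \<in> space M \<Longrightarrow> \<bar>Y r \<omega>\<bar> \<le> K" for r \<omega>
    unfolding Y_def K_def by (rule abs_weighted_innovation_bounded)
  have int_YY: "integrable M (\<lambda>\<omega>. Y r \<omega> * Y q \<omega>)" for r q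
  proof (rule integrable_bounded[where B = "K * K"])
    fix \<omega> assume "\<omega> \<in> space M"
    then show "\<bar>Y r \<omega> * Y q \<omega>\<bar> \<le> K * K"
      unfolding abs_mult using Y_bounded by (intro mult_mono) (auto intro: order_trans[OF abs_ge_zero])
  qed (simp add: Y_def)
  have orth: "expectation (\<lambda>\<omega>. Y r \<omega> * Y q \<omega>) = 0" if "r \<noteq> q" for r q
  proof -
    have "expectation (\<lambda>\<omega>. innovation a s2 w r \<omega> * innovation a s2 w q \<omega>) = 0"
      using that expectation_innovation_mult[of q r] expectation_innovation_mult[of r q]
      by (cases "q < r") (auto simp: mult.commute)
    moreover have "Y r \<omega> * Y q \<omega>
        = ((\<Sum>k<T - r. (a\<^sup>2) ^ k) * (\<Sum>k<T - q. (a\<^sup>2) ^ k)) * (innovation a s2 w r \<omega> * innovation a s2 w q \<omega>)" for \<omega>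
      by (simp add: Y_def ac_simps)
    ultimately show ?thesis
      by simp
  qed
  have "expectation (\<lambda>\<omega>. (\<Sum>r<T. Y r \<omega>)\<^sup>2) = (\<Sum>r<T. expectation (\<lambda>\<omega>. (Y r \<omega>)\<^sup>2))"
    using int_YY orth by (intro expectation_sq_sum_orthogonal) auto
  also have "\<dots> \<le> (\<Sum>r<T. K\<^sup>2)"
  proof (rule sum_mono)
    fix r
    show "expectation (\<lambda>\<omega>. (Y r \<omega>)\<^sup>2) \<le> K\<^sup>2"
    proof (rule integral_le_const)
      show "integrable M (\<lambda>\<omega>. (Y r \<omega>)\<^sup>2)"
        using int_YY[of r r] by (simp add: power2_eq_square)
      show "AE \<omega> in M. (Y r \<omega>)\<^sup>2 \<le> K\<^sup>2"
        using Y_bounded by (intro AE_I2) (metis abs_ge_zero power2_abs power_mono)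
    qed
  qed
  finally show ?thesis
    by (simp add: Y_def K_def)
qed

end

theorem lemma3:
  fixes M :: "'a measure" and w :: "nat \<Rightarrow> 'a \<Rightarrow> real"
    and a wbar sigma :: real and T :: nat
  assumes "prob_space M"
    and "\<And>t. w t \<in> borel_measurable M"
    and "prob_space.indep_vars M (\<lambda>_. borel) w UNIV"
    and "\<And>t. distr M borel (w t) = distr M borel (w 0)"
    and "\<And>t \<omega>. \<omega> \<in> space M \<Longrightarrow> \<bar>w t \<omega>\<bar> \<le> wbar"
    and "\<And>t. prob_space.expectation M (w t) = 0"
    and "\<And>t. prob_space.variance M (w t) = sigma\<^sup>2"
    and "\<bar>a\<bar> < 1"
  shows "prob_space.expectation M
           (\<lambda>\<omega>. (\<Sum>t=1..T. (traj a w t \<omega>)\<^sup>2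
                     - prob_space.expectation M (\<lambda>\<eta>. (traj a w t \<eta>)\<^sup>2))\<^sup>2)
         \<le> wbar ^ 4 * (1 + a\<^sup>2) / ((1 - \<bar>a\<bar>) ^ 4 * (1 - a\<^sup>2)) * real T"
proof -
  interpret stable_ar1 M w a wbar "sigma\<^sup>2"
    using assms(1-3,5-8) by (simp add: stable_ar1_def stable_ar1_axioms_def)
  have "expectation (\<lambda>\<omega>. (\<Sum>t=1..T. (traj a w t \<omega>)\<^sup>2 - expectation (\<lambda>\<eta>. (traj a w t \<eta>)\<^sup>2))\<^sup>2)
      = expectation (\<lambda>\<omega>. (\<Sum>r<T. (\<Sum>k<T - r. (a\<^sup>2) ^ k) * innovation a (sigma\<^sup>2) w r \<omega>)\<^sup>2)"
    by (simp only: centred_traj_sq_sum_eq)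
  also have "\<dots> \<le> real T * ((wbar / (1 - \<bar>a\<bar>))\<^sup>2)\<^sup>2"
    by (rule expectation_weighted_innovation_sum_sq_le)
  also have "\<dots> \<le> real T * (wbar ^ 4 * (1 + a\<^sup>2) / ((1 - \<bar>a\<bar>) ^ 4 * (1 - a\<^sup>2)))"
    using fourth_power_div_le[OF assms(8)] by (rule mult_left_mono) simp
  finally show ?thesis
    by (simp only: mult.commute)
qed

end
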